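(* Let $\lambda$ be a partition, $\mu\in\mathcal{D}(\lambda)$ and $\nu\in\mathcal{U}(\lambda)$. Then \[ \lim_{q\to1}\gamma_{\nu/\lambda/\mu}(q,q)=(h_\lambda(c_{\mu,\nu}))^2, \] and consequently \[ \lim_{q\to1}\mathcal{P}_\lambda(\mu\rightarrow\nu)|_{t=q}=\lim_{q\to1}\overline{\mathcal{P}}_\lambda(\mu\leftarrow\nu)|_{t=q}=\frac{(H_\lambda)^2}{H_\mu H_\nu}\cdot\frac{1}{(h_\lambda(c_{\mu,\nu}))^2}. \]
   Context: Partitions are Young diagrams in French convention (cells $(x,y)\in\mathbb{Z}_{>0}^2$, $x\le\lambda_y$), $\lambda'$ the conjugate; for $c=(x,y)\in\lambda$, $a_\lambda(c)=\lambda_y-x$, $\ell_\lambda(c)=\lambda'_x-y$, $h_\lambda(c)=a_\lambda(c)+\ell_\lambda(c)+1$, $H_\kappa=\prod_{c\in\kappa}h_\kappa(c)$. $n(\kappa)=\sum_{c\in\kappa}\ell_\kappa(c)$, $n'(\kappa)=\sum_{c\in\kappa}a_\kappa(c)$, $n(\rho/\kappa)=n(\rho)-n(\kappa)$, $n'(\rho/\kappa)=n'(\rho)-n'(\kappa)$. $\mathcal{U}(\lambda)$ (resp. $\mathcal{D}(\lambda)$): partitions obtained by adding (resp. removing) one cell. For $\kappa\subseteq\rho$, $\mathcal{R}_{\rho/\kappa}$ (resp. $\mathcal{C}_{\rho/\kappa}$): cells of $\kappa$ in a row (resp. column) containing a cell of $\rho/\kappa$. $[i,j]=1-q^it^j$.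 For $\kappa\lessdot\rho$ (one-cell difference): $\alpha_{\rho/\kappa}=\prod_{c\in\mathcal{R}_{\rho/\kappa}}\frac{[a_\kappa(c),\ell_\kappa(c)+1]}{[a_\rho(c),\ell_\rho(c)+1]}\prod_{c\in\mathcal{C}_{\rho/\kappa}}\frac{[a_\kappa(c)+1,\ell_\kappa(c)]}{[a_\rho(c)+1,\ell_\rho(c)]}$, $\overline{\alpha}_{\rho/\kappa}=\prod_{c\in\mathcal{R}_{\rho/\kappa}}\frac{[a_\kappa(c)+1,\ell_\kappa(c)]}{[a_\rho(c)+1,\ell_\rho(c)]}\prod_{c\in\mathcal{C}_{\rho/\kappa}}\frac{[a_\kappa(c),\ell_\kappa(c)+1]}{[a_\rho(c),\ell_\rho(c)+1]}$, $\beta=1/\alpha$, $\overline{\beta}=1/\overline{\alpha}$. With $A=n'(\lambda/\mu)-n'(\nu/\lambda)$, $B=n(\nu/\lambda)-n(\lambda/\mu)$: $\gamma_{\nu/\lambda/\mu}(q,t)=\frac{(1-q^At^B)(1-q^{A+1}t^{B-1})}{(1-q)(1-t)}$, $\mathcal{P}_\lambda(\mu\rightarrow\nu)=t^{B-1}\alpha_{\nu/\lambda}\beta_{\lambda/\mu}/\gamma_{\nu/\lambda/\mu}$, $\overline{\mathcal{P}}_\lambda(\mu\leftarrow\nu)=t^{B-1}\overline{\alpha}_{\nu/\lambda}\overline{\beta}_{\lambda/\mu}/\gamma_{\nu/\lambda/\mu}$. The cell $c_{\mu,\nu}$: let $c_1$ be the cell in the row of $\nu/\lambda$ and the column of $\lambda/\mu$,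 and $c_2$ the cell in the column of $\nu/\lambda$ and the row of $\lambda/\mu$; exactly one of them lies in $\lambda$, and that one is $c_{\mu,\nu}$. *)

theory Defs
  imports Complex_Main
begin

text \<open>Partitions are weakly decreasing lists of positive naturals; the row y (1-indexed)
  has length lam!(y-1). Cells are pairs (x,y) with x,y \<ge> 1 (French convention).\<close>

definition is_partition :: "nat list \<Rightarrow> bool" where
  "is_partition lam \<longleftrightarrow> sorted_wrt (\<ge>) lam \<and> 0 \<notin> set lam"

definition prow :: "nat list \<Rightarrow> nat \<Rightarrow> nat" where
  "prow lam y = (if 1 \<le> y \<and> y \<le> length lam then lam ! (y - 1) else 0)"

definition pcol :: "nat list \<Rightarrow> nat \<Rightarrow> nat" where
  "pcol lam x = card {y. 1 \<le> y \<and> y \<le> length lam \<and> x \<le> prow lam y}"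

definition cells :: "nat list \<Rightarrow> (nat \<times> nat) set" where
  "cells lam = {(x, y). 1 \<le> y \<and> 1 \<le> x \<and> x \<le> prow lam y}"

definition arm :: "nat list \<Rightarrow> nat \<times> nat \<Rightarrow> nat" where
  "arm lam c = prow lam (snd c) - fst c"

definition leg :: "nat list \<Rightarrow> nat \<times> nat \<Rightarrow> nat" where
  "leg lam c = pcol lam (fst c) - snd c"

definition hook :: "nat list \<Rightarrow> nat \<times> nat \<Rightarrow> nat" where
  "hook lam c = arm lam c + leg lam c + 1"

definition hookprod :: "nat list \<Rightarrow> nat" where
  "hookprod lam = (\<Prod>c\<in>cells lam. hook lam c)"

definition nleg :: "nat list \<Rightarrow> nat" where
  "nleg lam = (\<Sum>c\<in>cells lam. leg lam c)"

definition narm :: "nat list \<Rightarrow> nat" where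
  "narm lam = (\<Sum>c\<in>cells lam. arm lam c)"

definition covers :: "nat list \<Rightarrow> nat list \<Rightarrow> bool" where
  "covers kappa rho \<longleftrightarrow> is_partition kappa \<and> is_partition rho \<and>
     cells kappa \<subseteq> cells rho \<and> card (cells rho - cells kappa) = 1"

definition Ups :: "nat list \<Rightarrow> nat list set" where
  "Ups lam = {nu. covers lam nu}"

definition Downs :: "nat list \<Rightarrow> nat list set" where
  "Downs lam = {mu. covers mu lam}"

definition Rset :: "nat list \<Rightarrow> nat list \<Rightarrow> (nat \<times> nat) set" where
  "Rset rho kappa = {c \<in> cells kappa. \<exists>d \<in> cells rho - cells kappa. snd d = snd c}"

definition Cset :: "nat list \<Rightarrow> nat list \<Rightarrow> (nat \<times> nat) set" where
  "Cset rho kappa = {c \<in> cells kappa. \<exists>d \<in> cells rho - cells kappa. fst d = fst c}"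

definition br :: "nat \<Rightarrow> nat \<Rightarrow> real \<Rightarrow> real \<Rightarrow> real" where
  "br i j q t = 1 - q ^ i * t ^ j"

definition alpha :: "nat list \<Rightarrow> nat list \<Rightarrow> real \<Rightarrow> real \<Rightarrow> real" where
  "alpha rho kappa q t =
     (\<Prod>c\<in>Rset rho kappa. br (arm kappa c) (leg kappa c + 1) q t / br (arm rho c) (leg rho c + 1) q t) *
     (\<Prod>c\<in>Cset rho kappa. br (arm kappa c + 1) (leg kappa c) q t / br (arm rho c + 1) (leg rho c) q t)"

definition alphabar :: "nat list \<Rightarrow> nat list \<Rightarrow> real \<Rightarrow> real \<Rightarrow> real" where
  "alphabar rho kappa q t =
     (\<Prod>c\<in>Rset rho kappa. br (arm kappa c + 1) (leg kappa c) q t / br (arm rho c + 1) (leg rho c) q t) *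
     (\<Prod>c\<in>Cset rho kappa. br (arm kappa c) (leg kappa c + 1) q t / br (arm rho c) (leg rho c + 1) q t)"

definition beta :: "nat list \<Rightarrow> nat list \<Rightarrow> real \<Rightarrow> real \<Rightarrow> real" where
  "beta rho kappa q t = 1 / alpha rho kappa q t"

definition betabar :: "nat list \<Rightarrow> nat list \<Rightarrow> real \<Rightarrow> real \<Rightarrow> real" where
  "betabar rho kappa q t = 1 / alphabar rho kappa q t"

definition expA :: "nat list \<Rightarrow> nat list \<Rightarrow> nat list \<Rightarrow> int" where
  "expA nu lam mu = (int (narm lam) - int (narm mu)) - (int (narm nu) - int (narm lam))"

definition expB :: "nat list \<Rightarrow> nat list \<Rightarrow> nat list \<Rightarrow> int" where
  "expB nu lam mu = (int (nleg nu) - int (nleg lam)) - (int (nleg lam) - int (nleg mu))"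

definition gamma :: "nat list \<Rightarrow> nat list \<Rightarrow> nat list \<Rightarrow> real \<Rightarrow> real \<Rightarrow> real" where
  "gamma nu lam mu q t =
     (let A = expA nu lam mu; B = expB nu lam mu in
      (1 - q powi A * t powi B) * (1 - q powi (A + 1) * t powi (B - 1)) / ((1 - q) * (1 - t)))"

definition Pfwd :: "nat list \<Rightarrow> nat list \<Rightarrow> nat list \<Rightarrow> real \<Rightarrow> real \<Rightarrow> real" where
  "Pfwd lam mu nu q t =
     t powi (expB nu lam mu - 1) * alpha nu lam q t * beta lam mu q t / gamma nu lam mu q t"

definition Pbwd :: "nat list \<Rightarrow> nat list \<Rightarrow> nat list \<Rightarrow> real \<Rightarrow> real \<Rightarrow> real" where
  "Pbwd lam mu nu q t =
     t powi (expB nu lam mu - 1) * alphabar nu lam q t * betabar lam mu q t / gamma nu lam mu q t"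

definition cmunu :: "nat list \<Rightarrow> nat list \<Rightarrow> nat list \<Rightarrow> nat \<times> nat" where
  "cmunu lam mu nu =
     (let d = the_elem (cells nu - cells lam); e = the_elem (cells lam - cells mu);
          c1 = (fst e, snd d); c2 = (fst d, snd e) in
      if c1 \<in> cells lam then c1 else c2)"

end

theory Submission
  imports Defs
begin

text \<open>At t = q every bracket [i,j] becomes 1 - q^(i+j), and (1 - q^n)/(1 - q) tends to n as
  q \<rightarrow> 1, so each ratio of brackets in alpha or alphabar tends to a ratio of hook lengths.
  Adding the cell (x,y) to a partition lengthens by one exactly the arms of the cells in row y
  and the legs of the cells in column x, i.e. of the cells in R and C; hence alpha and alphabar
  of a covering pair kappa, rho tend to H_kappa/H_rho. Likewise gamma(q,q) = ((1 - q^(A+B))/(1 - q))^2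
  tends to (A+B)^2, and if lambda/mu is the cell (x1,y1) and nu/lambda the cell (x2,y2), then
  A = x1 - x2 and B = y2 - y1, so A + B is, up to sign, the hook length of c_{mu,nu} in lambda.\<close>

lemma tendsto_powi_quotient_at_1:
  "((\<lambda>q::real. (1 - q powi n) / (1 - q)) \<longlongrightarrow> of_int n) (at 1)"
proof -
  have "((\<lambda>q::real. q powi n) has_field_derivative of_int n * 1 powi (n - 1) * 1) (at 1)"
    by (intro DERIV_power_int DERIV_ident) simp
  then have "((\<lambda>q::real. (q powi n - 1) / (q - 1)) \<longlongrightarrow> of_int n) (at 1)"
    by (simp add: has_field_derivative_iff)
  moreover have "(q powi n - 1) / (q - 1) = (1 - q powi n) / (1 - q)" for q :: real
    by (metis minus_diff_eq minus_divide_divide)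
  ultimately show ?thesis
    by simp
qed

lemma tendsto_power_quotient_at_1:
  "((\<lambda>q::real. (1 - q ^ n) / (1 - q)) \<longlongrightarrow> real n) (at 1)"
  using tendsto_powi_quotient_at_1[of "int n"] by simp

lemma tendsto_br_quotient_diag:
  assumes "i + j = m" "i' + j' = n" "n \<noteq> 0"
  shows "((\<lambda>q. br i j q q / br i' j' q q) \<longlongrightarrow> real m / real n) (at 1)"
proof -
  have "((\<lambda>q::real. ((1 - q ^ m) / (1 - q)) / ((1 - q ^ n) / (1 - q))) \<longlongrightarrow> real m / real n) (at 1)"
    by (rule tendsto_divide[OF tendsto_power_quotient_at_1 tendsto_power_quotient_at_1])
      (use assms(3) in simp)
  moreover have "\<forall>\<^sub>F q in at 1. ((1 - q ^ m) / (1 - q)) / ((1 - q ^ n) / (1 - q)) = br i j q q / br i' j' q q"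
    by (simp add: eventually_at_filter br_def power_add flip: assms(1,2))
  ultimately show ?thesis
    by (rule Lim_transform_eventually)
qed

lemma prow_antimono:
  assumes "is_partition lam" "1 \<le> i" "i \<le> j"
  shows "prow lam j \<le> prow lam i"
  using assms unfolding prow_def is_partition_def sorted_wrt_iff_nth_less
  by (cases "i = j") auto

lemma prow_pos_imp_row_range: "0 < prow lam y \<Longrightarrow> 1 \<le> y \<and> y \<le> length lam"
  unfolding prow_def by (auto split: if_splits)

lemma finite_cells: "finite (cells lam)"
proof (rule finite_subset)
  show "cells lam \<subseteq> {..sum_list lam} \<times> {..length lam}"
    by (auto simp: cells_def prow_def split: if_splits
        intro: order_trans[OF _ member_le_sum_list])
qed simp

lemma pcol_eq_card: "1 \<le> x \<Longrightarrow> pcol lam x = card {y. 1 \<le> y \<and> x \<le> prow lam y}"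
  unfolding pcol_def by (rule arg_cong[where f = card]) (use prow_pos_imp_row_range[of lam] in force)

lemma snd_le_pcol_fst:
  assumes "is_partition lam" "c \<in> cells lam"
  shows "snd c \<le> pcol lam (fst c)"
proof -
  obtain x y where c: "c = (x, y)" "1 \<le> y" "1 \<le> x" "x \<le> prow lam y"
    using assms(2) unfolding cells_def by auto
  have "{1..y} \<subseteq> {y'. 1 \<le> y' \<and> x \<le> prow lam y'}"
    using prow_antimono[OF assms(1)] c by (auto intro: order_trans)
  moreover have "finite {y'. 1 \<le> y' \<and> x \<le> prow lam y'}"
    by (rule finite_subset[of _ "{..length lam}"]) (use prow_pos_imp_row_range[of lam] c in force)+
  ultimately have "card {1..y} \<le> card {y'. 1 \<le> y' \<and> x \<le> prow lam y'}"
    by (rule card_mono[rotated])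
  then show ?thesis
    using c pcol_eq_card[of x lam] by simp
qed

locale adds_cell =
  fixes k r :: "nat list" and x y :: nat
  assumes covers: "covers k r"
    and new_cell: "cells r - cells k = {(x, y)}"
begin

lemma partitions: "is_partition k" "is_partition r"
  using covers unfolding covers_def by auto

lemma cells_eq: "cells r = insert (x, y) (cells k)" and new_cell_notin: "(x, y) \<notin> cells k"
  using covers new_cell unfolding covers_def by auto

lemma new_cell_pos: "1 \<le> x" "1 \<le> y"
  using new_cell unfolding cells_def by auto

lemma prow_k_le_prow_r: "prow k y' \<le> prow r y'"
proof (cases "prow k y' = 0")
  case False
  then have "(prow k y', y') \<in> cells k"
    using prow_pos_imp_row_range[of k y'] unfolding cells_def by auto
  then show ?thesis
    using cells_eq unfolding cells_def by auto
qed simp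

lemma prow_r_row: "prow r y = x"
proof -
  have "(x, y) \<in> cells r" "(x, y) \<notin> cells k"
    using new_cell by auto
  then have "(prow r y, y) \<in> cells r - cells k"
    unfolding cells_def by auto
  then show ?thesis
    using new_cell by auto
qed

lemma prow_other_row:
  assumes "y' \<noteq> y"
  shows "prow r y' = prow k y'"
proof (rule ccontr)
  assume "prow r y' \<noteq> prow k y'"
  then have "prow k y' < prow r y'"
    using prow_k_le_prow_r[of y'] by simp
  then have "(prow r y', y') \<in> cells r - cells k"
    using prow_pos_imp_row_range[of r y'] unfolding cells_def by auto
  then show False
    using new_cell assms by auto
qed

lemma prow_k_row: "prow k y = x - 1"
proof (rule ccontr)
  assume "prow k y \<noteq> x - 1"
  moreover have "prow k y < x"
    using new_cell_notin new_cell_pos unfolding cells_def by auto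
  ultimately have "(x - 1, y) \<in> cells r - cells k"
    using prow_r_row new_cell_pos unfolding cells_def by auto
  then show False
    using new_cell new_cell_pos by simp
qed

lemma le_prow_r_iff:
  assumes "1 \<le> y'"
  shows "x \<le> prow r y' \<longleftrightarrow> y' \<le> y"
proof
  assume x_le: "x \<le> prow r y'"
  show "y' \<le> y"
  proof (rule ccontr)
    assume "\<not> y' \<le> y"
    then have "prow r y' = prow k y'"
      using prow_other_row[of y'] by simp
    also have "\<dots> \<le> prow k y"
      using prow_antimono[OF partitions(1)] new_cell_pos \<open>\<not> y' \<le> y\<close> by simp
    finally show False
      using x_le prow_k_row new_cell_pos by simp
  qed
next
  assume "y' \<le> y"
  then show "x \<le> prow r y'"
    using prow_antimono[OF partitions(2) assms] prow_r_row by metis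
qed

lemma le_prow_k_iff: "1 \<le> y' \<Longrightarrow> x \<le> prow k y' \<longleftrightarrow> y' < y"
  using le_prow_r_iff[of y'] prow_other_row[of y'] prow_k_row new_cell_pos by (cases "y' = y") auto

lemma pcol_r_col: "pcol r x = y"
proof -
  have "{y'. 1 \<le> y' \<and> x \<le> prow r y'} = {1..y}"
    using le_prow_r_iff by auto
  then show ?thesis
    using pcol_eq_card[of x r] new_cell_pos by simp
qed

lemma pcol_k_col: "pcol k x = y - 1"
proof -
  have "{y'. 1 \<le> y' \<and> x \<le> prow k y'} = {1..<y}"
    using le_prow_k_iff by auto
  then show ?thesis
    using pcol_eq_card[of x k] new_cell_pos by simp
qed

lemma pcol_r: "1 \<le> x' \<Longrightarrow> pcol r x' = pcol k x' + (if x' = x then 1 else 0)"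
proof (cases "x' = x")
  case True
  then show ?thesis
    using pcol_r_col pcol_k_col new_cell_pos by simp
next
  case False
  assume "1 \<le> x'"
  have "x' \<le> prow r y' \<longleftrightarrow> x' \<le> prow k y'" for y'
    using False prow_other_row[of y'] prow_r_row prow_k_row by (cases "y' = y") auto
  then show ?thesis
    using False pcol_eq_card[OF \<open>1 \<le> x'\<close>] by simp
qed

lemma arm_r: "c \<in> cells k \<Longrightarrow> arm r c = arm k c + (if snd c = y then 1 else 0)"
  using prow_other_row[of "snd c"] prow_r_row prow_k_row unfolding arm_def cells_def by auto

lemma leg_r: "c \<in> cells k \<Longrightarrow> leg r c = leg k c + (if fst c = x then 1 else 0)"
  using pcol_r[of "fst c"] snd_le_pcol_fst[OF partitions(1)] unfolding leg_def cells_def by auto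

lemma arm_leg_r_new_cell: "arm r (x, y) = 0" "leg r (x, y) = 0"
  using prow_r_row pcol_r_col unfolding arm_def leg_def by auto

lemma row_cells_k: "{c \<in> cells k. snd c = y} = {1..x - 1} \<times> {y}"
  using prow_k_row new_cell_pos unfolding cells_def by auto

lemma col_cells_k: "{c \<in> cells k. fst c = x} = {x} \<times> {1..<y}"
  using le_prow_k_iff new_cell_pos unfolding cells_def by auto

lemma sum_cells_r: "(\<Sum>c\<in>cells r. f c) = f (x, y) + (\<Sum>c\<in>cells k. f c)"
  using new_cell_notin finite_cells unfolding cells_eq by simp

lemma narm_r: "narm r = narm k + (x - 1)"
proof -
  have "narm r = (\<Sum>c\<in>cells k. arm k c + (if snd c = y then 1 else 0))"
    unfolding narm_def sum_cells_r arm_leg_r_new_cell using arm_r by simp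
  also have "\<dots> = narm k + card {c \<in> cells k. snd c = y}"
    unfolding narm_def by (simp add: sum.distrib finite_cells flip: sum.inter_filter)
  finally show ?thesis
    unfolding row_cells_k by simp
qed

lemma nleg_r: "nleg r = nleg k + (y - 1)"
proof -
  have "nleg r = (\<Sum>c\<in>cells k. leg k c + (if fst c = x then 1 else 0))"
    unfolding nleg_def sum_cells_r arm_leg_r_new_cell using leg_r by simp
  also have "\<dots> = nleg k + card {c \<in> cells k. fst c = x}"
    unfolding nleg_def by (simp add: sum.distrib finite_cells flip: sum.inter_filter)
  finally show ?thesis
    unfolding col_cells_k by simp
qed

lemma Rset_eq: "Rset r k = {c \<in> cells k. snd c = y}"
  unfolding Rset_def new_cell by auto

lemma Cset_eq: "Cset r k = {c \<in> cells k. fst c = x}"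
  unfolding Cset_def new_cell by auto

lemma hookprod_ratio:
  "(\<Prod>c\<in>Rset r k. real (hook k c) / real (hook r c)) * (\<Prod>c\<in>Cset r k. real (hook k c) / real (hook r c))
     = real (hookprod k) / real (hookprod r)"
proof -
  let ?f = "\<lambda>c. real (hook k c) / real (hook r c)"
  have "(\<Prod>c\<in>Rset r k. ?f c) * (\<Prod>c\<in>Cset r k. ?f c) = (\<Prod>c\<in>Rset r k \<union> Cset r k. ?f c)"
    using new_cell_notin finite_cells by (intro prod.union_disjoint[symmetric]) (auto simp: Rset_eq Cset_eq)
  also have "\<dots> = (\<Prod>c\<in>cells k. ?f c)"
  proof (rule prod.mono_neutral_left[OF finite_cells])
    show "Rset r k \<union> Cset r k \<subseteq> cells k"
      unfolding Rset_eq Cset_eq by auto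
    show "\<forall>c\<in>cells k - (Rset r k \<union> Cset r k). ?f c = 1"
      using arm_r leg_r unfolding Rset_eq Cset_eq hook_def by auto
  qed
  also have "\<dots> = real (hookprod k) / real (\<Prod>c\<in>cells k. hook r c)"
    unfolding hookprod_def by (simp add: prod_dividef)
  also have "(\<Prod>c\<in>cells k. hook r c) = hookprod r"
    unfolding hookprod_def cells_eq using new_cell_notin finite_cells arm_leg_r_new_cell
    by (simp add: hook_def)
  finally show ?thesis .
qed

lemma tendsto_alpha_diag: "((\<lambda>q. alpha r k q q) \<longlongrightarrow> real (hookprod k) / real (hookprod r)) (at 1)"
proof -
  have "((\<lambda>q. alpha r k q q) \<longlongrightarrow>
          (\<Prod>c\<in>Rset r k. real (hook k c) / real (hook r c)) *
          (\<Prod>c\<in>Cset r k. real (hook k c) / real (hook r c))) (at 1)"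
    unfolding alpha_def by (intro tendsto_mult tendsto_prod tendsto_br_quotient_diag) (auto simp: hook_def)
  then show ?thesis
    unfolding hookprod_ratio .
qed

lemma tendsto_alphabar_diag: "((\<lambda>q. alphabar r k q q) \<longlongrightarrow> real (hookprod k) / real (hookprod r)) (at 1)"
proof -
  have "((\<lambda>q. alphabar r k q q) \<longlongrightarrow>
          (\<Prod>c\<in>Rset r k. real (hook k c) / real (hook r c)) *
          (\<Prod>c\<in>Cset r k. real (hook k c) / real (hook r c))) (at 1)"
    unfolding alphabar_def by (intro tendsto_mult tendsto_prod tendsto_br_quotient_diag) (auto simp: hook_def)
  then show ?thesis
    unfolding hookprod_ratio .
qed

end

lemma covers_imp_adds_cell: "covers k r \<Longrightarrow> \<exists>x y. adds_cell k r x y"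
  unfolding adds_cell_def covers_def by (metis card_1_singletonE surj_pair)

lemma hookprod_pos: "0 < hookprod lam"
  unfolding hookprod_def hook_def by (simp add: prod_pos)

lemma tendsto_gamma_diag:
  "((\<lambda>q. gamma nu lam mu q q) \<longlongrightarrow> (of_int (expA nu lam mu + expB nu lam mu))\<^sup>2) (at 1)"
proof -
  define n where "n = expA nu lam mu + expB nu lam mu"
  have "((\<lambda>q::real. ((1 - q powi n) / (1 - q))\<^sup>2) \<longlongrightarrow> (of_int n)\<^sup>2) (at 1)"
    by (intro tendsto_power tendsto_powi_quotient_at_1)
  moreover have "\<forall>\<^sub>F q in at (1::real). q > 0"
    by (rule order_tendstoD(1)[OF tendsto_ident_at]) simp
  then have "\<forall>\<^sub>F q in at 1. ((1 - q powi n) / (1 - q))\<^sup>2 = gamma nu lam mu q q"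
    by eventually_elim (simp add: gamma_def n_def power_int_add[symmetric] power2_eq_square Let_def)
  ultimately show ?thesis
    unfolding n_def by (rule Lim_transform_eventually)
qed

lemma hook_cmunu:
  assumes lower: "adds_cell mu lam x1 y1" and upper: "adds_cell lam nu x2 y2"
  shows "int (hook lam (cmunu lam mu nu)) = \<bar>expA nu lam mu + expB nu lam mu\<bar>"
proof -
  interpret lower: adds_cell mu lam x1 y1 by (rule lower)
  interpret upper: adds_cell lam nu x2 y2 by (rule upper)
  have AB: "expA nu lam mu + expB nu lam mu = (int x1 - int x2) + (int y2 - int y1)"
    unfolding expA_def expB_def lower.narm_r upper.narm_r lower.nleg_r upper.nleg_r
    using lower.new_cell_pos upper.new_cell_pos by simp
  have cmunu: "cmunu lam mu nu = (if (x1, y2) \<in> cells lam then (x1, y2) else (x2, y1))"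
    unfolding cmunu_def lower.new_cell upper.new_cell by (simp add: Let_def)
  show ?thesis
  proof (cases "(x1, y2) \<in> cells lam")
    case True
    then have "y2 \<le> y1" "x1 \<le> x2 - 1"
      using lower.le_prow_r_iff[of y2] upper.prow_k_row unfolding cells_def by auto
    then have "int (hook lam (x1, y2)) = (int x2 - int x1) + (int y1 - int y2)"
      using upper.prow_k_row lower.pcol_r_col lower.new_cell_pos
      unfolding hook_def arm_def leg_def by auto
    then show ?thesis
      using True cmunu AB by simp
  next
    case False
    then have "y1 < y2" "x2 - 1 < x1"
      using lower.le_prow_r_iff[of y2] upper.prow_k_row lower.new_cell_pos upper.new_cell_pos
      unfolding cells_def by auto
    then have "int (hook lam (x2, y1)) = (int x1 - int x2) + (int y2 - int y1)"
      using lower.prow_r_row upper.pcol_k_col unfolding hook_def arm_def leg_def by auto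
    then show ?thesis
      using False cmunu AB by simp
  qed
qed

lemma tendsto_gamma_diag_hook:
  assumes "adds_cell mu lam x1 y1" "adds_cell lam nu x2 y2"
  shows "((\<lambda>q. gamma nu lam mu q q) \<longlongrightarrow> (real (hook lam (cmunu lam mu nu)))\<^sup>2) (at 1)"
proof -
  have "(real (hook lam (cmunu lam mu nu)))\<^sup>2 = (of_int (expA nu lam mu + expB nu lam mu))\<^sup>2"
    using arg_cong[OF hook_cmunu[OF assms], of "\<lambda>z. (of_int z :: real)\<^sup>2"] by simp
  then show ?thesis
    using tendsto_gamma_diag by simp
qed

theorem lemma4p15:
  fixes lam mu nu :: "nat list"
  assumes "is_partition lam" and "mu \<in> Downs lam" and "nu \<in> Ups lam"
  shows "((\<lambda>q. gamma nu lam mu q q) \<longlongrightarrow> (real (hook lam (cmunu lam mu nu)))\<^sup>2) (at 1) \<and>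
         ((\<lambda>q. Pfwd lam mu nu q q) \<longlongrightarrow>
           (real (hookprod lam))\<^sup>2 / (real (hookprod mu) * real (hookprod nu))
             * (1 / (real (hook lam (cmunu lam mu nu)))\<^sup>2)) (at 1) \<and>
         ((\<lambda>q. Pbwd lam mu nu q q) \<longlongrightarrow>
           (real (hookprod lam))\<^sup>2 / (real (hookprod mu) * real (hookprod nu))
             * (1 / (real (hook lam (cmunu lam mu nu)))\<^sup>2)) (at 1)"
proof -
  obtain x1 y1 where lower: "adds_cell mu lam x1 y1"
    using assms(2) covers_imp_adds_cell unfolding Downs_def by blast
  obtain x2 y2 where upper: "adds_cell lam nu x2 y2"
    using assms(3) covers_imp_adds_cell unfolding Ups_def by blast
  define h where "h = real (hook lam (cmunu lam mu nu))"
  define H where "H = (real (hookprod lam))\<^sup>2 / (real (hookprod mu) * real (hookprod nu)) * (1 / h\<^sup>2)"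
  have gamma: "((\<lambda>q. gamma nu lam mu q q) \<longlongrightarrow> h\<^sup>2) (at 1)"
    unfolding h_def by (rule tendsto_gamma_diag_hook[OF lower upper])
  have tendsto_transition:
    "((\<lambda>q. q powi (expB nu lam mu - 1) * f q * (1 / g q) / gamma nu lam mu q q) \<longlongrightarrow> H) (at 1)"
    if "(f \<longlongrightarrow> real (hookprod lam) / real (hookprod nu)) (at 1)"
      and "(g \<longlongrightarrow> real (hookprod mu) / real (hookprod lam)) (at 1)" for f g
  proof -
    have pos: "0 < h" "0 < real (hookprod lam)" "0 < real (hookprod mu)" "0 < real (hookprod nu)"
      using hookprod_pos unfolding h_def hook_def by auto
    have "((\<lambda>q. q powi (expB nu lam mu - 1) * f q * (1 / g q) / gamma nu lam mu q q) \<longlongrightarrow>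
           1 powi (expB nu lam mu - 1) * (real (hookprod lam) / real (hookprod nu))
             * (1 / (real (hookprod mu) / real (hookprod lam))) / h\<^sup>2) (at 1)"
      by (intro tendsto_intros that gamma) (use pos in auto)
    then show ?thesis
      using pos by (simp add: H_def field_simps power2_eq_square)
  qed
  show ?thesis
    using gamma
      tendsto_transition[OF adds_cell.tendsto_alpha_diag[OF upper] adds_cell.tendsto_alpha_diag[OF lower]]
      tendsto_transition[OF adds_cell.tendsto_alphabar_diag[OF upper]
        adds_cell.tendsto_alphabar_diag[OF lower]]
    unfolding Pfwd_def Pbwd_def beta_def betabar_def h_def H_def by blast
qed

end
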